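(* Let $G$ be a $\lambda$-graph and $Q$ a query over $G$. Then $Q^{\Downarrow}$ is a bisimulation if and only if there exists a bisimulation on the nodes of $G$ containing $Q$.
   Context: A pre-$\lambda$-graph is a directed graph whose nodes are of four kinds: an application node $@(n_1,n_2)$ has exactly two children, its left child $n_1$ and its right child $n_2$; an abstraction node $\lambda(n)$ has exactly one child, its body $n$; a free variable node has no children and carries an atom $\mathrm{id}(n)$ from a fixed set of atoms, distinct free variable nodes carrying distinct atoms; a bound variable node $\mathrm{var}(l)$ has exactly one outgoing binding edge, to an abstraction node $l$ (its binder). A trace is a finite sequence of directions from $\{\swarrow,\downarrow,\searrow\}$; $\epsilon$ is the empty trace and $d\cdot\tau$ is the trace $\tau$ extended by one final step $d$. Paths $n\xrightarrow{\tau}m$ are defined inductively: $n\xrightarrow{\epsilon}n$; if $n\xrightarrow{\tau}\lambda(m)$ then $n\xrightarrow{\downarrow\cdot\tau}m$; if $n\xrightarrow{\tau}@(m_1,m_2)$ then $n\xrightarrow{\swarrow\cdot\tau}m_1$ and $n\xrightarrow{\searrow\cdot\tau}m_2$ (binding edges are never followed). The path $n\xrightarrow{\tau}$ crosses a node $m$ if either $n\xrightarrow{\tau}m$, or $\tau=d\cdot\tau'$ and $n\xrightarrow{\tau'}$ crosses $m$. A root is a node $r$ such that the only path ending in $r$ has the empty trace. A node $m$ dominates $n$ if every path from a root to $n$ crosses $m$. A $\lambda$-graph is a pre-$\lambda$-graph that has finitely many nodes, is acyclic ($n\xrightarrow{\tau}n$ holds only for $\tau=\epsilon$), and is dominated (every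 bound variable node $\mathrm{var}(l)$ is dominated by its binder $l$). Two nodes are homogeneous if both are application nodes, or both abstraction nodes, or both free variable nodes, or both bound variable nodes; a binary relation $R$ on nodes is homogeneous if it only relates homogeneous nodes. Rules: $(\swarrow)$: $@(n_1,n_2)\,R\,@(m_1,m_2)$ implies $n_1\,R\,m_1$; $(\searrow)$: $@(n_1,n_2)\,R\,@(m_1,m_2)$ implies $n_2\,R\,m_2$; $(\downarrow)$: $\lambda(n)\,R\,\lambda(m)$ implies $n\,R\,m$; $(\circlearrowright)$: $\mathrm{var}(n)\,R\,\mathrm{var}(m)$ implies $n\,R\,m$. $R$ is propagated if closed under $(\swarrow),(\downarrow),(\searrow)$. A bisimulation is a homogeneous propagated relation closed also under $(\circlearrowright)$. $R^{\Downarrow}$ (propagation) is the smallest propagated relation containing $R$. A query over $G$ is a binary relation on the roots of $G$. *)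

theory Defs
  imports Main
begin

text \<open>Node kinds: application with left/right child, abstraction with body,
free variable carrying an atom, bound variable with its binder.\<close>
datatype ('n, 'a) nkind = App 'n 'n | Abs 'n | FreeV 'a | BVar 'n

record ('n, 'a) pregraph =
  nodes :: "'n set"
  lab   :: "'n \<Rightarrow> ('n, 'a) nkind"

datatype dir = SW | Down | SE

text \<open>A trace is a list; the head is the final step, so \<open>d # \<tau>\<close> is \<open>d\<cdot>\<tau>\<close>.\<close>
type_synonym trace = "dir list"

definition pre_lambda_graph :: "('n, 'a) pregraph \<Rightarrow> bool" where
  "pre_lambda_graph G \<longleftrightarrow>
     (\<forall>n\<in>nodes G. case lab G n of
         App n1 n2 \<Rightarrow> n1 \<in> nodes G \<and> n2 \<in> nodes G
       | Abs m \<Rightarrow> m \<in> nodes G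
       | FreeV x \<Rightarrow> True
       | BVar l \<Rightarrow> l \<in> nodes G \<and> (\<exists>b. lab G l = Abs b)) \<and>
     (\<forall>n\<in>nodes G. \<forall>m\<in>nodes G. \<forall>x. lab G n = FreeV x \<and> lab G m = FreeV x \<longrightarrow> n = m)"

inductive path :: "('n, 'a) pregraph \<Rightarrow> 'n \<Rightarrow> trace \<Rightarrow> 'n \<Rightarrow> bool" for G where
  eps: "n \<in> nodes G \<Longrightarrow> path G n [] n"
| down: "path G n \<tau> l \<Longrightarrow> lab G l = Abs m \<Longrightarrow> path G n (Down # \<tau>) m"
| sw: "path G n \<tau> l \<Longrightarrow> lab G l = App m1 m2 \<Longrightarrow> path G n (SW # \<tau>) m1"
| se: "path G n \<tau> l \<Longrightarrow> lab G l = App m1 m2 \<Longrightarrow> path G n (SE # \<tau>) m2"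

fun crosses :: "('n, 'a) pregraph \<Rightarrow> 'n \<Rightarrow> trace \<Rightarrow> 'n \<Rightarrow> bool" where
  "crosses G n [] m \<longleftrightarrow> path G n [] m"
| "crosses G n (d # \<tau>) m \<longleftrightarrow> path G n (d # \<tau>) m \<or> crosses G n \<tau> m"

definition is_root :: "('n, 'a) pregraph \<Rightarrow> 'n \<Rightarrow> bool" where
  "is_root G r \<longleftrightarrow> r \<in> nodes G \<and> (\<forall>n \<tau>. path G n \<tau> r \<longrightarrow> \<tau> = [])"

definition dominates :: "('n, 'a) pregraph \<Rightarrow> 'n \<Rightarrow> 'n \<Rightarrow> bool" where
  "dominates G m n \<longleftrightarrow> (\<forall>r \<tau>. is_root G r \<and> path G r \<tau> n \<longrightarrow> crosses G r \<tau> m)"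

definition lambda_graph :: "('n, 'a) pregraph \<Rightarrow> bool" where
  "lambda_graph G \<longleftrightarrow> pre_lambda_graph G \<and> finite (nodes G) \<and>
     (\<forall>n \<tau>. path G n \<tau> n \<longrightarrow> \<tau> = []) \<and>
     (\<forall>n\<in>nodes G. \<forall>l. lab G n = BVar l \<longrightarrow> dominates G l n)"

fun homog_kind :: "('n, 'a) nkind \<Rightarrow> ('n, 'a) nkind \<Rightarrow> bool" where
  "homog_kind (App _ _) (App _ _) = True"
| "homog_kind (Abs _) (Abs _) = True"
| "homog_kind (FreeV _) (FreeV _) = True"
| "homog_kind (BVar _) (BVar _) = True"
| "homog_kind _ _ = False"

definition homogeneous :: "('n, 'a) pregraph \<Rightarrow> ('n \<times> 'n) set \<Rightarrow> bool" where
  "homogeneous G R \<longleftrightarrow> (\<forall>(n, m)\<in>R. homog_kind (lab G n) (lab G m))"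

definition propagated :: "('n, 'a) pregraph \<Rightarrow> ('n \<times> 'n) set \<Rightarrow> bool" where
  "propagated G R \<longleftrightarrow>
     (\<forall>n m n1 n2 m1 m2. (n, m) \<in> R \<and> lab G n = App n1 n2 \<and> lab G m = App m1 m2
         \<longrightarrow> (n1, m1) \<in> R \<and> (n2, m2) \<in> R) \<and>
     (\<forall>n m n' m'. (n, m) \<in> R \<and> lab G n = Abs n' \<and> lab G m = Abs m' \<longrightarrow> (n', m') \<in> R)"

definition bisimulation :: "('n, 'a) pregraph \<Rightarrow> ('n \<times> 'n) set \<Rightarrow> bool" where
  "bisimulation G R \<longleftrightarrow> homogeneous G R \<and> propagated G R \<and>
     (\<forall>n m l k. (n, m) \<in> R \<and> lab G n = BVar l \<and> lab G m = BVar k \<longrightarrow> (l, k) \<in> R)"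

text \<open>Propagation \<open>R\<^sup>\<Down>\<close>: the smallest propagated relation containing R.\<close>
inductive_set propagation :: "('n, 'a) pregraph \<Rightarrow> ('n \<times> 'n) set \<Rightarrow> ('n \<times> 'n) set"
  for G R where
  base: "p \<in> R \<Longrightarrow> p \<in> propagation G R"
| sw: "(n, m) \<in> propagation G R \<Longrightarrow> lab G n = App n1 n2 \<Longrightarrow> lab G m = App m1 m2
        \<Longrightarrow> (n1, m1) \<in> propagation G R"
| se: "(n, m) \<in> propagation G R \<Longrightarrow> lab G n = App n1 n2 \<Longrightarrow> lab G m = App m1 m2
        \<Longrightarrow> (n2, m2) \<in> propagation G R"
| down: "(n, m) \<in> propagation G R \<Longrightarrow> lab G n = Abs n' \<Longrightarrow> lab G m = Abs m'
        \<Longrightarrow> (n', m') \<in> propagation G R"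

definition is_query :: "('n, 'a) pregraph \<Rightarrow> ('n \<times> 'n) set \<Rightarrow> bool" where
  "is_query G Q \<longleftrightarrow> (\<forall>(r, s)\<in>Q. is_root G r \<and> is_root G s)"

end

theory Submission
  imports Defs
begin

text \<open>Every pair of \<open>Q\<^sup>\<Down>\<close> is reached from a pair of roots in \<open>Q\<close> by one common trace. For bound
  variables \<open>var(l)\<close>, \<open>var(k)\<close> reached this way, dominance puts \<open>l\<close> and \<open>k\<close> on the two paths,
  at suffixes \<open>u\<close>, \<open>v\<close> of that trace. If, say, \<open>v = w @ u\<close> with \<open>w \<noteq> []\<close>, then \<open>l\<close> is related
  both to the node \<open>y\<close> at trace \<open>u\<close> and to its proper descendant \<open>k\<close> by any bisimulation
  containing \<open>Q\<close>; pushing such a configuration down along \<open>w\<close> repeatedly yields ever smaller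
  sets of descendants, impossible in a finite acyclic graph. Hence \<open>u = v\<close>, so \<open>(l, k)\<close> is
  reached by a common trace and lies in \<open>Q\<^sup>\<Down>\<close>.\<close>

lemma pre_lambda_graph_children:
  assumes "pre_lambda_graph G" "l \<in> nodes G"
  shows "lab G l = Abs m \<Longrightarrow> m \<in> nodes G"
    and "lab G l = App m1 m2 \<Longrightarrow> m1 \<in> nodes G \<and> m2 \<in> nodes G"
  using assms unfolding pre_lambda_graph_def by fastforce+

lemma path_nodes:
  assumes "pre_lambda_graph G" "path G a t b"
  shows "a \<in> nodes G \<and> b \<in> nodes G"
  using assms(2) by induction (use pre_lambda_graph_children[OF assms(1)] in blast)+

lemma path_append:
  "path G b r c \<Longrightarrow> path G a s b \<Longrightarrow> path G a (r @ s) c"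
  by (induction rule: path.induct) (auto intro: path.intros)

lemma path_append_split:
  assumes "pre_lambda_graph G" "path G a (r @ s) c"
  shows "\<exists>b. path G a s b \<and> path G b r c"
  using assms(2)
proof (induction r arbitrary: c)
  case Nil
  then show ?case using path_nodes[OF assms(1)] by (fastforce intro: path.eps)
next
  case (Cons d r)
  from Cons.prems show ?case
    by cases (use Cons.IH in \<open>fastforce intro: path.intros\<close>)+
qed

lemma crosses_imp_path_suffix:
  "crosses G n t m \<Longrightarrow> \<exists>w u. t = w @ u \<and> path G n u m"
proof (induction t)
  case Nil
  then show ?case by auto
next
  case (Cons d t)
  then show ?case by (metis append_Cons append_Nil crosses.simps(2))
qed

lemma propagated_propagation: "propagated G (propagation G Q)"
  unfolding propagated_def by (blast intro: propagation.intros)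

lemma propagation_least:
  assumes "propagated G R" "Q \<subseteq> R"
  shows "propagation G Q \<subseteq> R"
proof
  fix p assume "p \<in> propagation G Q"
  then show "p \<in> R"
    by induction (use assms in \<open>unfold propagated_def, blast+\<close>)
qed

lemma propagation_along_paths:
  "path G a t n \<Longrightarrow> (a, b) \<in> propagation G Q \<Longrightarrow> path G b t m \<Longrightarrow> (n, m) \<in> propagation G Q"
proof (induction arbitrary: m rule: path.induct)
  case (eps n)
  from eps.prems(2) show ?case by cases (use eps in simp_all)
next
  case (down n \<tau> l m')
  from down.prems(2) show ?case
    by cases (use down in \<open>auto intro: propagation.down\<close>)
next
  case (sw n \<tau> l m1 m2)
  from sw.prems(2) show ?case
    by cases (use sw in \<open>auto intro: propagation.sw\<close>)
next
  case (se n \<tau> l m1 m2)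
  from se.prems(2) show ?case
    by cases (use se in \<open>auto intro: propagation.se\<close>)
qed

lemma propagation_iff_common_trace:
  assumes "Q \<subseteq> nodes G \<times> nodes G"
  shows "(n, m) \<in> propagation G Q \<longleftrightarrow> (\<exists>r s t. (r, s) \<in> Q \<and> path G r t n \<and> path G s t m)"
proof
  have "\<exists>r s t. (r, s) \<in> Q \<and> path G r t (fst p) \<and> path G s t (snd p)"
    if "p \<in> propagation G Q" for p
    using that
  proof induction
    case (base p)
    then show ?case using assms by (cases p) (auto intro!: exI[of _ "[]"] path.eps)
  qed (fastforce intro: path.intros)+
  then show "(n, m) \<in> propagation G Q \<Longrightarrow> \<exists>r s t. (r, s) \<in> Q \<and> path G r t n \<and> path G s t m"
    by fastforce
next
  show "\<exists>r s t. (r, s) \<in> Q \<and> path G r t n \<and> path G s t m \<Longrightarrow> (n, m) \<in> propagation G Q"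
    by (blast intro: propagation_along_paths propagation.base)
qed

lemma propagation_subset_nodes:
  assumes "pre_lambda_graph G" "Q \<subseteq> nodes G \<times> nodes G"
  shows "propagation G Q \<subseteq> nodes G \<times> nodes G"
  using propagation_iff_common_trace[OF assms(2)] path_nodes[OF assms(1)] by fast

lemma homog_kind_sym: "homog_kind x y \<Longrightarrow> homog_kind y x"
  by (induction x y rule: homog_kind.induct) simp_all

lemma homogeneous_converse: "homogeneous G R \<Longrightarrow> homogeneous G (R\<inverse>)"
  unfolding homogeneous_def using homog_kind_sym by fastforce

lemma propagated_converse: "propagated G R \<Longrightarrow> propagated G (R\<inverse>)"
  unfolding propagated_def by blast

lemma lift_path_along_snd:
  assumes "homogeneous G R" "propagated G R" "R \<subseteq> nodes G \<times> nodes G"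
    and "path G b t c" "(a, b) \<in> R"
  shows "\<exists>a'. path G a t a' \<and> (a', c) \<in> R"
  using assms(4,5)
proof induction
  case (eps n)
  then show ?case using assms(3) by (blast intro: path.eps)
next
  case (down n \<tau> l m)
  then obtain a' where a': "path G a \<tau> a'" "(a', l) \<in> R" by blast
  with assms(1) down.hyps(2) obtain m' where "lab G a' = Abs m'"
    unfolding homogeneous_def by (cases "lab G a'") auto
  with a' down.hyps(2) assms(2) show ?case
    unfolding propagated_def by (blast intro: path.down)
next
  case (sw n \<tau> l m1 m2)
  then obtain a' where a': "path G a \<tau> a'" "(a', l) \<in> R" by blast
  with assms(1) sw.hyps(2) obtain x y where "lab G a' = App x y"
    unfolding homogeneous_def by (cases "lab G a'") auto
  with a' sw.hyps(2) assms(2) show ?case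
    unfolding propagated_def by (blast intro: path.sw)
next
  case (se n \<tau> l m1 m2)
  then obtain a' where a': "path G a \<tau> a'" "(a', l) \<in> R" by blast
  with assms(1) se.hyps(2) obtain x y where "lab G a' = App x y"
    unfolding homogeneous_def by (cases "lab G a'") auto
  with a' se.hyps(2) assms(2) show ?case
    unfolding propagated_def by (blast intro: path.se)
qed

lemma lift_path_along_fst:
  assumes "homogeneous G R" "propagated G R" "R \<subseteq> nodes G \<times> nodes G"
    and "path G a t a'" "(a, b) \<in> R"
  shows "\<exists>b'. path G b t b' \<and> (a', b') \<in> R"
  using lift_path_along_snd[OF homogeneous_converse[OF assms(1)] propagated_converse[OF assms(2)]
      _ assms(4), of b] assms(3,5) by auto

definition descendants :: "('n, 'a) pregraph \<Rightarrow> 'n \<Rightarrow> 'n set" where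
  "descendants G b = {x. \<exists>s. path G b s x}"

lemma finite_descendants:
  assumes "pre_lambda_graph G" "finite (nodes G)"
  shows "finite (descendants G b)"
  by (rule finite_subset[OF _ assms(2)])
    (use path_nodes[OF assms(1)] in \<open>auto simp: descendants_def\<close>)

lemma descendants_psubset:
  assumes "pre_lambda_graph G" "\<forall>n \<tau>. path G n \<tau> n \<longrightarrow> \<tau> = []"
    and "path G b w c" "w \<noteq> []"
  shows "descendants G c \<subset> descendants G b"
proof
  show "descendants G c \<subseteq> descendants G b"
    using path_append[OF _ assms(3)] unfolding descendants_def by blast
  have "b \<in> descendants G b"
    using path_nodes[OF assms(1,3)] unfolding descendants_def by (blast intro: path.eps)
  moreover have "b \<notin> descendants G c"
    using path_append[OF _ assms(3)] assms(2,4) unfolding descendants_def by blast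
  ultimately show "descendants G c \<noteq> descendants G b" by blast
qed

text \<open>From \<open>(a, b), (a, c) \<in> R\<close> and \<open>b \<rightarrow>\<^sup>w c\<close>, lifting \<open>w\<close> twice gives \<open>(a', c), (a', c') \<in> R\<close> with
  \<open>c \<rightarrow>\<^sup>w c'\<close>: the same configuration one level down.\<close>

lemma related_to_proper_descendant:
  assumes "pre_lambda_graph G" "finite (nodes G)" "\<forall>n \<tau>. path G n \<tau> n \<longrightarrow> \<tau> = []"
    and R: "homogeneous G R" "propagated G R" "R \<subseteq> nodes G \<times> nodes G"
    and "(a, b) \<in> R" "(a, c) \<in> R" "path G b w c"
  shows "w = []"
  using assms(7-9)
proof (induction "card (descendants G b)" arbitrary: a b c rule: less_induct)
  case less
  show ?case
  proof (rule ccontr)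
    assume w: "w \<noteq> []"
    obtain a' where a': "path G a w a'" "(a', c) \<in> R"
      using lift_path_along_snd[OF R less.prems(3,1)] by blast
    obtain c' where c': "path G c w c'" "(a', c') \<in> R"
      using lift_path_along_fst[OF R a'(1) less.prems(2)] by blast
    have "card (descendants G c) < card (descendants G b)"
      by (rule psubset_card_mono[OF finite_descendants[OF assms(1,2)]
            descendants_psubset[OF assms(1,3) less.prems(3) w]])
    with less.hyps a'(2) c' w show False by blast
  qed
qed

lemma related_at_extended_trace_imp_Nil:
  assumes G: "pre_lambda_graph G" "finite (nodes G)" "\<forall>n \<tau>. path G n \<tau> n \<longrightarrow> \<tau> = []"
    and R: "homogeneous G R" "propagated G R" "R \<subseteq> nodes G \<times> nodes G"
    and same_trace: "\<And>x y. path G r u x \<Longrightarrow> path G s u y \<Longrightarrow> (x, y) \<in> R"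
    and "path G r u l" "path G s (w @ u) k" "(l, k) \<in> R"
  shows "w = []"
proof -
  obtain y where "path G s u y" "path G y w k"
    using path_append_split[OF G(1) assms(9)] by blast
  then show ?thesis
    using related_to_proper_descendant[OF G R] same_trace assms(8,10) by blast
qed

lemma binder_on_root_path:
  assumes "lambda_graph G" "is_root G r" "path G r t n" "lab G n = BVar l"
  shows "\<exists>w u. t = w @ u \<and> path G r u l"
proof -
  have "pre_lambda_graph G"
    using assms(1) unfolding lambda_graph_def by simp
  then have "n \<in> nodes G"
    using path_nodes[OF _ assms(3)] by simp
  then have "dominates G l n"
    using assms(1,4) unfolding lambda_graph_def by simp
  then have "crosses G r t l"
    using assms(2,3) unfolding dominates_def by simp
  then show ?thesis
    by (rule crosses_imp_path_suffix)
qed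

lemma propagation_binder_closed:
  assumes G: "lambda_graph G" and "is_query G Q"
    and R: "bisimulation G R" "Q \<subseteq> R" "R \<subseteq> nodes G \<times> nodes G"
    and nm: "(n, m) \<in> propagation G Q" "lab G n = BVar l" "lab G m = BVar k"
  shows "(l, k) \<in> propagation G Q"
proof -
  have pre: "pre_lambda_graph G" and fin: "finite (nodes G)"
    and acyc: "\<forall>n \<tau>. path G n \<tau> n \<longrightarrow> \<tau> = []"
    using G unfolding lambda_graph_def by auto
  have Q: "Q \<subseteq> nodes G \<times> nodes G"
    using assms(2) unfolding is_query_def is_root_def by auto
  have Rh: "homogeneous G R" and Rp: "propagated G R"
    using R(1) unfolding bisimulation_def by auto
  have PR: "propagation G Q \<subseteq> R"
    using propagation_least[OF Rp R(2)] .
  obtain r s t where rs: "(r, s) \<in> Q" "path G r t n" "path G s t m"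
    using nm(1) propagation_iff_common_trace[OF Q] by blast
  have "is_root G r" "is_root G s"
    using assms(2) rs(1) unfolding is_query_def by auto
  then obtain w1 u w2 v where
    uv: "t = w1 @ u" "path G r u l" "t = w2 @ v" "path G s v k"
    using binder_on_root_path[OF G _ rs(2) nm(2)] binder_on_root_path[OF G _ rs(3) nm(3)]
    by blast
  have same_trace: "(x, y) \<in> propagation G Q" if "path G r z x" "path G s z y" for x y z
    using that rs(1) propagation_iff_common_trace[OF Q] by blast
  have lk: "(l, k) \<in> R"
    using R(1) nm PR unfolding bisimulation_def by blast
  obtain w where "v = w @ u \<or> u = w @ v"
    using uv(1,3) append_eq_append_conv2[of w1 u w2 v] by metis
  then have "u = v"
  proof
    assume "v = w @ u"
    then show "u = v"
      using related_at_extended_trace_imp_Nil[OF pre fin acyc Rh Rp R(3), of r _ s] same_trace PR uv(2,4) lk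
      by blast
  next
    assume "u = w @ v"
    then show "u = v"
      using related_at_extended_trace_imp_Nil[OF pre fin acyc homogeneous_converse[OF Rh]
          propagated_converse[OF Rp], of s _ r] same_trace PR uv(2,4) lk R(3)
      by blast
  qed
  then show ?thesis using same_trace uv(2,4) by blast
qed

theorem mainTheorem10:
  fixes G :: "('n, 'a) pregraph" and Q :: "('n \<times> 'n) set"
  assumes "lambda_graph G" and "is_query G Q"
  shows "bisimulation G (propagation G Q) \<longleftrightarrow>
         (\<exists>R. R \<subseteq> nodes G \<times> nodes G \<and> Q \<subseteq> R \<and> bisimulation G R)"
proof
  assume "bisimulation G (propagation G Q)"
  moreover have "propagation G Q \<subseteq> nodes G \<times> nodes G"
    using assms unfolding lambda_graph_def is_query_def is_root_def
    by (intro propagation_subset_nodes) auto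
  ultimately show "\<exists>R. R \<subseteq> nodes G \<times> nodes G \<and> Q \<subseteq> R \<and> bisimulation G R"
    using propagation.base by blast
next
  assume "\<exists>R. R \<subseteq> nodes G \<times> nodes G \<and> Q \<subseteq> R \<and> bisimulation G R"
  then obtain R where R: "R \<subseteq> nodes G \<times> nodes G" "Q \<subseteq> R" "bisimulation G R" by blast
  then have "propagation G Q \<subseteq> R"
    using propagation_least unfolding bisimulation_def by blast
  then have "homogeneous G (propagation G Q)"
    using R(3) unfolding bisimulation_def homogeneous_def by blast
  then show "bisimulation G (propagation G Q)"
    unfolding bisimulation_def
    using propagated_propagation propagation_binder_closed[OF assms R(3,2,1)] by blast
qed

end
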